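(* Let $X=\{a,a+1,\dots,b\}\subseteq\mathbb{N}$ and let $f^\alpha:\mathcal{P}^n\to X$ be the median voter scheme with fixed ballots $\alpha=(\alpha_1,\dots,\alpha_{n-1})\in X^{n-1}$, $\alpha_1\le\dots\le\alpha_{n-1}$. Then $f^\alpha$ is NOM if and only if $\alpha_1\in\{a,a+1\}$ and $\alpha_{n-1}\in\{b-1,b\}$.
   Context: $N=\{1,\dots,n\}$, $n\ge2$; $X=\{a,a+1,\dots,b\}$ with $b=a+(m-1)$, $m\ge2$; $\mathcal{P}$ is the set of all strict linear orders on $X$ (not necessarily single-peaked); $t(P_i)$ the top of $P_i$. The median voter scheme is $f^\alpha(P)=\mathrm{med}\{t(P_1),\dots,t(P_n),\alpha_1,\dots,\alpha_{n-1}\}$, the median of these $2n-1$ numbers. Option set $O(P_i)=\{f(P_i,P_{-i}):P_{-i}\in\mathcal{P}^{n-1}\}$. $P_i'$ is a manipulation of $f$ at $P_i$ if $f(P_i',P_{-i})P_if(P_i,P_{-i})$ for some $P_{-i}$; it is obvious if the $P_i$-worst element of $O(P_i')$ is strictly $P_i$-better than the $P_i$-worst element of $O(P_i)$, or the $P_i$-best element of $O(P_i')$ is strictly $P_i$-better than the $P_i$-best element of $O(P_i)$. $f$ is not obviously manipulable (NOM) if it admits no obvious manipulation. *)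

theory Defs
  imports Main
begin

text \<open>A preference is a strict linear order on X, given as a relation:
  (x,y) \<in> P means x is strictly preferred to y.\<close>
definition prefs :: "nat set \<Rightarrow> nat rel set" where
  "prefs X = {P. strict_linear_order_on X P \<and> P \<subseteq> X \<times> X}"

definition profiles :: "nat \<Rightarrow> nat set \<Rightarrow> (nat \<Rightarrow> nat rel) set" where
  "profiles n X = {P. (\<forall>i\<in>{1..n}. P i \<in> prefs X) \<and> (\<forall>i. i \<notin> {1..n} \<longrightarrow> P i = {})}"

definition best :: "nat rel \<Rightarrow> nat set \<Rightarrow> nat" where
  "best P S = (THE x. x \<in> S \<and> (\<forall>y\<in>S. y \<noteq> x \<longrightarrow> (x, y) \<in> P))"

definition worst :: "nat rel \<Rightarrow> nat set \<Rightarrow> nat" where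
  "worst P S = (THE x. x \<in> S \<and> (\<forall>y\<in>S. y \<noteq> x \<longrightarrow> (y, x) \<in> P))"

definition top_of :: "nat set \<Rightarrow> nat rel \<Rightarrow> nat" where
  "top_of X P = best P X"

text \<open>Median of a list (of odd length 2k-1: the k-th smallest element).\<close>
definition med :: "nat list \<Rightarrow> nat" where
  "med xs = sort xs ! (length xs div 2)"

definition mvs :: "nat set \<Rightarrow> nat \<Rightarrow> nat list \<Rightarrow> (nat \<Rightarrow> nat rel) \<Rightarrow> nat" where
  "mvs X n alpha P = med (map (\<lambda>i. top_of X (P i)) [1..<n+1] @ alpha)"

definition option_set :: "nat \<Rightarrow> nat set \<Rightarrow> ((nat \<Rightarrow> nat rel) \<Rightarrow> nat) \<Rightarrow> nat \<Rightarrow> nat rel \<Rightarrow> nat set" where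
  "option_set n X f i Q = {f (P(i := Q)) | P. P \<in> profiles n X}"

definition manipulation :: "nat \<Rightarrow> nat set \<Rightarrow> ((nat \<Rightarrow> nat rel) \<Rightarrow> nat) \<Rightarrow> nat \<Rightarrow> nat rel \<Rightarrow> nat rel \<Rightarrow> bool" where
  "manipulation n X f i Q Q' \<longleftrightarrow> (\<exists>P\<in>profiles n X. (f (P(i := Q')), f (P(i := Q))) \<in> Q)"

definition obvious_manipulation :: "nat \<Rightarrow> nat set \<Rightarrow> ((nat \<Rightarrow> nat rel) \<Rightarrow> nat) \<Rightarrow> nat \<Rightarrow> nat rel \<Rightarrow> nat rel \<Rightarrow> bool" where
  "obvious_manipulation n X f i Q Q' \<longleftrightarrow> manipulation n X f i Q Q' \<and>
     ((worst Q (option_set n X f i Q'), worst Q (option_set n X f i Q)) \<in> Q \<or>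
      (best Q (option_set n X f i Q'), best Q (option_set n X f i Q)) \<in> Q)"

definition NOM :: "nat \<Rightarrow> nat set \<Rightarrow> ((nat \<Rightarrow> nat rel) \<Rightarrow> nat) \<Rightarrow> bool" where
  "NOM n X f \<longleftrightarrow> \<not> (\<exists>i\<in>{1..n}. \<exists>Q\<in>prefs X. \<exists>Q'\<in>prefs X. obvious_manipulation n X f i Q Q')"

end

theory Submission
  imports Defs
begin

(* Voter i, whose preference has top t, has as option set the interval between min t alpha_1 and
   max t alpha_(n-1): the top t and the n - 1 fixed ballots, n of the 2n - 1 entries, lie in that
   interval, so the median does too, and letting all other voters report a common top x pins the
   median at any x in between. Hence the best option is always t, and only the worst option can be
   obviously improved.
   If alpha_1 <= a + 1 and alpha_(n-1) >= b - 1, the worst truthful option lies in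
   [alpha_1, alpha_(n-1)] (it can only fall outside by being t itself, which is the worst option
   only when the option set is a singleton), and this interval is contained in every option set.
   If alpha_1 >= a + 2, a voter with top a and bottom a + 1 may get a + 1, while reporting the top
   alpha_1 shrinks the options to [alpha_1, alpha_(n-1)], which avoids a + 1; symmetrically when
   alpha_(n-1) <= b - 2. *)

lemma prefs_asym: "Q \<in> prefs X \<Longrightarrow> (x, y) \<in> Q \<Longrightarrow> (y, x) \<notin> Q"
  by (auto simp: prefs_def strict_linear_order_on_def irrefl_def dest: transD)

lemma prefs_total: "Q \<in> prefs X \<Longrightarrow> x \<in> X \<Longrightarrow> y \<in> X \<Longrightarrow> x \<noteq> y \<Longrightarrow> (x, y) \<in> Q \<or> (y, x) \<in> Q"
  by (simp add: prefs_def strict_linear_order_on_def total_on_def)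

lemma converse_in_prefs: "Q \<in> prefs X \<Longrightarrow> Q\<inverse> \<in> prefs X"
  by (auto simp: prefs_def strict_linear_order_on_def)

lemma worst_eq_best_converse: "worst Q S = best (Q\<inverse>) S"
  by (simp add: worst_def best_def)

lemma best_eqI:
  assumes "Q \<in> prefs X" "x \<in> S" "\<forall>y\<in>S. y \<noteq> x \<longrightarrow> (x, y) \<in> Q"
  shows "best Q S = x"
  unfolding best_def
proof (rule the_equality)
  show "x \<in> S \<and> (\<forall>y\<in>S. y \<noteq> x \<longrightarrow> (x, y) \<in> Q)"
    using assms(2,3) by blast
next
  fix z
  assume z: "z \<in> S \<and> (\<forall>y\<in>S. y \<noteq> z \<longrightarrow> (z, y) \<in> Q)"
  show "z = x"
  proof (rule ccontr)
    assume "z \<noteq> x"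
    then have "(z, x) \<in> Q" "(x, z) \<in> Q"
      using z assms(2,3) by auto
    then show False
      using prefs_asym[OF assms(1)] by blast
  qed
qed

lemma ex_best:
  assumes "Q \<in> prefs X" "finite S" "S \<noteq> {}" "S \<subseteq> X"
  shows "\<exists>x\<in>S. \<forall>y\<in>S. y \<noteq> x \<longrightarrow> (x, y) \<in> Q"
  using assms(2-4)
proof (induction S rule: finite_ne_induct)
  case (insert z F)
  then obtain x where x: "x \<in> F" "\<forall>y\<in>F. y \<noteq> x \<longrightarrow> (x, y) \<in> Q"
    by auto
  have "trans Q"
    using assms(1) by (simp add: prefs_def strict_linear_order_on_def)
  show ?case
  proof (cases "(z, x) \<in> Q")
    case True
    have "(z, y) \<in> Q" if "y \<in> F" for y
      using that x True \<open>trans Q\<close> by (cases "y = x") (auto dest: transD)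
    then show ?thesis
      using insert.hyps(2) by auto
  next
    case False
    then have "(x, z) \<in> Q"
      using prefs_total[OF assms(1), of x z] insert x by auto
    then show ?thesis
      using x by auto
  qed
qed auto

lemma best_spec:
  assumes "Q \<in> prefs X" "finite S" "S \<noteq> {}" "S \<subseteq> X"
  shows "best Q S \<in> S \<and> (\<forall>y\<in>S. y \<noteq> best Q S \<longrightarrow> (best Q S, y) \<in> Q)"
proof -
  obtain x where "x \<in> S" "\<forall>y\<in>S. y \<noteq> x \<longrightarrow> (x, y) \<in> Q"
    using ex_best[OF assms] by blast
  then show ?thesis
    using best_eqI[OF assms(1)] by simp
qed

lemma best_in: "Q \<in> prefs X \<Longrightarrow> finite S \<Longrightarrow> S \<noteq> {} \<Longrightarrow> S \<subseteq> X \<Longrightarrow> best Q S \<in> S"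
  using best_spec by blast

lemma best_preferred:
  "Q \<in> prefs X \<Longrightarrow> finite S \<Longrightarrow> S \<subseteq> X \<Longrightarrow> y \<in> S \<Longrightarrow> y \<noteq> best Q S \<Longrightarrow> (best Q S, y) \<in> Q"
  using best_spec by blast

lemma not_preferred_to_best:
  assumes "Q \<in> prefs X" "finite S" "S \<subseteq> X" "y \<in> S"
  shows "(y, best Q S) \<notin> Q"
proof (cases "y = best Q S")
  case True
  then show ?thesis
    using prefs_asym[OF assms(1)] by blast
next
  case False
  then show ?thesis
    using best_preferred[OF assms] prefs_asym[OF assms(1)] by blast
qed

lemma worst_eqI:
  "Q \<in> prefs X \<Longrightarrow> x \<in> S \<Longrightarrow> \<forall>y\<in>S. y \<noteq> x \<longrightarrow> (y, x) \<in> Q \<Longrightarrow> worst Q S = x"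
  unfolding worst_eq_best_converse by (rule best_eqI[OF converse_in_prefs]) auto

lemma worst_in: "Q \<in> prefs X \<Longrightarrow> finite S \<Longrightarrow> S \<noteq> {} \<Longrightarrow> S \<subseteq> X \<Longrightarrow> worst Q S \<in> S"
  unfolding worst_eq_best_converse by (rule best_in[OF converse_in_prefs])

lemma worst_not_preferred:
  "Q \<in> prefs X \<Longrightarrow> finite S \<Longrightarrow> S \<subseteq> X \<Longrightarrow> y \<in> S \<Longrightarrow> (worst Q S, y) \<notin> Q"
  unfolding worst_eq_best_converse using not_preferred_to_best[OF converse_in_prefs] by blast

lemma top_of_in: "Q \<in> prefs X \<Longrightarrow> finite X \<Longrightarrow> X \<noteq> {} \<Longrightarrow> top_of X Q \<in> X"
  unfolding top_of_def by (rule best_in) auto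

lemma top_of_preferred:
  "Q \<in> prefs X \<Longrightarrow> finite X \<Longrightarrow> y \<in> X \<Longrightarrow> y \<noteq> top_of X Q \<Longrightarrow> (top_of X Q, y) \<in> Q"
  unfolding top_of_def by (rule best_preferred) auto

lemma worst_ne_top_of:
  assumes "Q \<in> prefs X" "finite X" "S \<subseteq> X" "y \<in> S" "y \<noteq> top_of X Q"
  shows "worst Q S \<noteq> top_of X Q"
proof -
  have "(top_of X Q, y) \<in> Q"
    using top_of_preferred[OF assms(1,2) subsetD[OF assms(3,4)] assms(5)] .
  moreover have "(worst Q S, y) \<notin> Q"
    using worst_not_preferred[OF assms(1) finite_subset[OF assms(3,2)] assms(3,4)] .
  ultimately show ?thesis
    by metis
qed

lemma obvious_manipulationI:
  assumes Q: "Q \<in> prefs X" and "finite X"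
    and sub: "option_set n X f i Q \<subseteq> X" "option_set n X f i Q' \<subseteq> X"
    and bottom: "\<forall>u\<in>X. u \<noteq> z \<longrightarrow> (u, z) \<in> Q"
    and z: "z \<in> option_set n X f i Q" "z \<notin> option_set n X f i Q'"
  shows "obvious_manipulation n X f i Q Q'"
proof -
  let ?O = "option_set n X f i Q" and ?O' = "option_set n X f i Q'"
  obtain P where P: "P \<in> profiles n X" "f (P(i := Q)) = z"
    using z(1) unfolding option_set_def by blast
  have "f (P(i := Q')) \<in> ?O'"
    using P(1) unfolding option_set_def by blast
  then have "f (P(i := Q')) \<in> X" "f (P(i := Q')) \<noteq> z"
    using sub(2) z(2) by auto
  then have "(f (P(i := Q')), f (P(i := Q))) \<in> Q"
    unfolding P(2) using bottom by blast
  then have "manipulation n X f i Q Q'"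
    unfolding manipulation_def using P(1) by blast
  moreover have "worst Q ?O = z"
    using worst_eqI[OF Q z(1)] sub(1) bottom by blast
  moreover have "worst Q ?O' \<in> ?O'"
    using worst_in[OF Q finite_subset[OF sub(2) \<open>finite X\<close>] _ sub(2)] \<open>f (P(i := Q')) \<in> ?O'\<close>
    by blast
  then have "(worst Q ?O', z) \<in> Q"
    using sub(2) bottom z(2) by auto
  ultimately show ?thesis
    unfolding obvious_manipulation_def by simp
qed

lemma not_obvious_manipulationI:
  assumes Q: "Q \<in> prefs X" and "finite X"
    and sub: "option_set n X f i Q \<subseteq> X" "option_set n X f i Q' \<subseteq> X"
    and top: "top_of X Q \<in> option_set n X f i Q"
    and worst: "worst Q (option_set n X f i Q) \<in> option_set n X f i Q'"
  shows "\<not> obvious_manipulation n X f i Q Q'"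
proof -
  let ?O = "option_set n X f i Q" and ?O' = "option_set n X f i Q'"
  have fin: "finite ?O'"
    using finite_subset[OF sub(2) \<open>finite X\<close>] .
  have "best Q ?O = top_of X Q"
    using best_eqI[OF Q top] top_of_preferred[OF Q \<open>finite X\<close>] sub(1) by blast
  moreover have "best Q ?O' \<in> X"
    using best_in[OF Q fin _ sub(2)] worst sub(2) by blast
  then have "(best Q ?O', top_of X Q) \<notin> Q"
    unfolding top_of_def using not_preferred_to_best[OF Q \<open>finite X\<close>] by blast
  moreover have "(worst Q ?O', worst Q ?O) \<notin> Q"
    using worst_not_preferred[OF Q fin sub(2) worst] .
  ultimately show ?thesis
    unfolding obvious_manipulation_def by simp
qed

definition pref_of_rank :: "nat set \<Rightarrow> (nat \<Rightarrow> nat) \<Rightarrow> nat rel" where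
  "pref_of_rank X r = {(u, v). u \<in> X \<and> v \<in> X \<and> r u < r v}"

lemma pref_of_rank_in_prefs: "inj_on r X \<Longrightarrow> pref_of_rank X r \<in> prefs X"
  by (auto simp: pref_of_rank_def prefs_def strict_linear_order_on_def trans_def irrefl_def
      total_on_def inj_on_eq_iff nat_neq_iff[symmetric])

lemma top_of_pref_of_rank:
  assumes "inj_on r X" "x \<in> X" "\<forall>y\<in>X. y \<noteq> x \<longrightarrow> r x < r y"
  shows "top_of X (pref_of_rank X r) = x"
  unfolding top_of_def using assms
  by (intro best_eqI[OF pref_of_rank_in_prefs]) (auto simp: pref_of_rank_def)

lemma ex_pref_with_top:
  assumes "x \<in> X"
  obtains Q where "Q \<in> prefs X" "top_of X Q = x"
proof
  let ?r = "\<lambda>y. if y = x then 0 else Suc y"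
  have "inj_on ?r X"
    by (auto simp: inj_on_def)
  then show "pref_of_rank X ?r \<in> prefs X" "top_of X (pref_of_rank X ?r) = x"
    using assms by (auto intro: pref_of_rank_in_prefs top_of_pref_of_rank)
qed

lemma ex_pref_with_top_and_bottom:
  assumes "finite X" "x \<in> X" "z \<in> X" "x \<noteq> z"
  obtains Q where "Q \<in> prefs X" "top_of X Q = x" "\<forall>u\<in>X. u \<noteq> z \<longrightarrow> (u, z) \<in> Q"
proof
  let ?r = "\<lambda>y. if y = x then 0 else if y = z then Suc (Suc (Max X)) else Suc y"
  have le_Max: "y \<le> Max X" if "y \<in> X" for y
    using assms(1) that by simp
  have "inj_on ?r X"
    by (auto simp: inj_on_def dest: le_Max)
  then show "pref_of_rank X ?r \<in> prefs X" "top_of X (pref_of_rank X ?r) = x"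
    using assms by (auto intro: pref_of_rank_in_prefs top_of_pref_of_rank)
  show "\<forall>u\<in>X. u \<noteq> z \<longrightarrow> (u, z) \<in> pref_of_rank X ?r"
    using assms by (auto simp: pref_of_rank_def dest: le_Max)
qed

lemma sort_nth_le_if_many_le:
  fixes xs :: "'a::linorder list"
  assumes "k < length (filter (\<lambda>x. x \<le> v) xs)"
  shows "sort xs ! k \<le> v"
proof (rule ccontr)
  let ?ys = "sort xs"
  assume gt: "\<not> ?ys ! k \<le> v"
  have "i < k" if "i < length ?ys" "?ys ! i \<le> v" for i
  proof (rule ccontr)
    assume "\<not> i < k"
    then have "?ys ! k \<le> ?ys ! i"
      using that(1) by (simp add: sorted_nth_mono)
    then show False
      using that(2) gt by simp
  qed
  then have "{i. i < length ?ys \<and> ?ys ! i \<le> v} \<subseteq> {..<k}"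
    by auto
  then have "length (filter (\<lambda>x. x \<le> v) ?ys) \<le> k"
    unfolding length_filter_conv_card by (metis card_lessThan card_mono finite_lessThan)
  then show False
    using assms by (simp add: filter_sort)
qed

lemma sort_nth_ge_if_many_ge:
  fixes xs :: "'a::linorder list"
  assumes "k < length xs" "length xs \<le> k + length (filter (\<lambda>x. v \<le> x) xs)"
  shows "v \<le> sort xs ! k"
proof (rule ccontr)
  let ?ys = "sort xs"
  assume lt: "\<not> v \<le> ?ys ! k"
  have "k < i" if "i < length ?ys" "v \<le> ?ys ! i" for i
  proof (rule ccontr)
    assume "\<not> k < i"
    then have "?ys ! i \<le> ?ys ! k"
      using assms(1) by (simp add: sorted_nth_mono)
    then show False
      using that(2) lt by simp
  qed
  then have "{i. i < length ?ys \<and> v \<le> ?ys ! i} \<subseteq> {k<..<length xs}"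
    by auto
  then have "length (filter (\<lambda>x. v \<le> x) ?ys) \<le> length xs - Suc k"
    unfolding length_filter_conv_card
    by (metis card_greaterThanLessThan card_mono finite_greaterThanLessThan)
  then show False
    using assms by (simp add: filter_sort)
qed

lemma med_le_if_majority_le:
  "length xs < 2 * length (filter (\<lambda>x. x \<le> v) xs) \<Longrightarrow> med xs \<le> (v::nat)"
  unfolding med_def by (rule sort_nth_le_if_many_le) presburger

lemma med_ge_if_majority_ge:
  "length xs < 2 * length (filter (\<lambda>x. v \<le> x) xs) \<Longrightarrow> (v::nat) \<le> med xs"
  unfolding med_def using length_filter_le[of "\<lambda>x. v \<le> x" xs]
  by (intro sort_nth_ge_if_many_ge) presburger+

lemma length_filter_ballots:
  "length (filter R (map g [1..<n+1] @ alpha))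
    = card {j\<in>{1..n}. R (g j)} + length (filter R alpha)"
proof -
  have "length (filter R (map g [1..<n+1])) = length (filter (R \<circ> g) [1..<n+1])"
    by (simp only: filter_map length_map)
  also have "\<dots> = card (set (filter (R \<circ> g) [1..<n+1]))"
    by (rule distinct_card[symmetric]) simp
  also have "set (filter (R \<circ> g) [1..<n+1]) = {j\<in>{1..n}. R (g j)}"
    by auto
  finally show ?thesis
    by simp
qed

lemma majority_if_voter_and_all_ballots:
  assumes "length alpha = n - 1" "i \<in> {1..n}" "R (g i)" "\<forall>y\<in>set alpha. R y"
  shows "n \<le> card {j\<in>{1..n}. R (g j)} + length (filter R alpha)"
proof -
  have "card {i} \<le> card {j\<in>{1..n}. R (g j)}"
    using assms(2,3) by (intro card_mono) auto
  moreover have "filter R alpha = alpha"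
    using assms(4) by simp
  ultimately show ?thesis
    using assms(1) by simp
qed

lemma majority_if_all_but_one_voter:
  assumes "i \<in> {1..n}" "\<forall>j\<in>{1..n}. j \<noteq> i \<longrightarrow> R (g j)" "R (g i) \<or> (\<exists>y\<in>set alpha. R y)"
  shows "n \<le> card {j\<in>{1..n}. R (g j)} + length (filter R alpha)"
proof (cases "R (g i)")
  case True
  then have "{j\<in>{1..n}. R (g j)} = {1..n}"
    using assms(2) by auto
  then show ?thesis
    by simp
next
  case False
  then have "{j\<in>{1..n}. R (g j)} = {1..n} - {i}"
    using assms(2) by auto
  then have "card {j\<in>{1..n}. R (g j)} = n - 1"
    using assms(1) by simp
  moreover have "length (filter R alpha) \<noteq> 0"
    using False assms(3) by (auto simp: filter_empty_conv)
  ultimately show ?thesis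
    by linarith
qed

lemma mvs_le_if_majority:
  assumes "0 < n" "length alpha = n - 1"
    and "n \<le> card {j\<in>{1..n}. top_of X (P j) \<le> v} + length (filter (\<lambda>y. y \<le> v) alpha)"
  shows "mvs X n alpha P \<le> v"
proof -
  let ?L = "map (\<lambda>j. top_of X (P j)) [1..<n+1] @ alpha"
  have "length (filter (\<lambda>y. y \<le> v) ?L)
      = card {j\<in>{1..n}. (\<lambda>y. y \<le> v) (top_of X (P j))} + length (filter (\<lambda>y. y \<le> v) alpha)"
    by (rule length_filter_ballots)
  moreover have "length ?L = n + (n - 1)"
    using assms(2) by simp
  ultimately show ?thesis
    unfolding mvs_def using assms(1,3) by (intro med_le_if_majority_le) simp
qed

lemma mvs_ge_if_majority:
  assumes "0 < n" "length alpha = n - 1"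
    and "n \<le> card {j\<in>{1..n}. v \<le> top_of X (P j)} + length (filter (\<lambda>y. v \<le> y) alpha)"
  shows "v \<le> mvs X n alpha P"
proof -
  let ?L = "map (\<lambda>j. top_of X (P j)) [1..<n+1] @ alpha"
  have "length (filter (\<lambda>y. v \<le> y) ?L)
      = card {j\<in>{1..n}. (\<lambda>y. v \<le> y) (top_of X (P j))} + length (filter (\<lambda>y. v \<le> y) alpha)"
    by (rule length_filter_ballots)
  moreover have "length ?L = n + (n - 1)"
    using assms(2) by simp
  ultimately show ?thesis
    unfolding mvs_def using assms(1,3) by (intro med_ge_if_majority_ge) simp
qed

lemma sorted_nth_first_le: "sorted xs \<Longrightarrow> y \<in> set xs \<Longrightarrow> xs ! 0 \<le> y"
  by (auto simp: in_set_conv_nth sorted_nth_mono)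

lemma sorted_le_nth_last: "sorted xs \<Longrightarrow> y \<in> set xs \<Longrightarrow> y \<le> xs ! (length xs - 1)"
  by (auto simp: in_set_conv_nth sorted_nth_mono)

lemma mvs_between:
  assumes "0 < n" "length alpha = n - 1" "sorted alpha" "i \<in> {1..n}"
  shows "min (top_of X (P i)) (alpha ! 0) \<le> mvs X n alpha P"
    and "mvs X n alpha P \<le> max (top_of X (P i)) (alpha ! (n - 2))"
proof -
  have "n - 2 = length alpha - 1"
    using assms(2) by simp
  then show "mvs X n alpha P \<le> max (top_of X (P i)) (alpha ! (n - 2))"
    using assms sorted_le_nth_last[OF assms(3)]
    by (intro mvs_le_if_majority majority_if_voter_and_all_ballots) (auto simp: le_max_iff_disj)
  show "min (top_of X (P i)) (alpha ! 0) \<le> mvs X n alpha P"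
    using assms sorted_nth_first_le[OF assms(3)]
    by (intro mvs_ge_if_majority majority_if_voter_and_all_ballots) (auto simp: min_le_iff_disj)
qed

lemma mvs_eq_if_other_tops_eq:
  assumes "2 \<le> n" "length alpha = n - 1" "i \<in> {1..n}"
    and "\<forall>j\<in>{1..n}. j \<noteq> i \<longrightarrow> top_of X (P j) = x"
    and "min (top_of X (P i)) (alpha ! 0) \<le> x" "x \<le> max (top_of X (P i)) (alpha ! (n - 2))"
  shows "mvs X n alpha P = x"
proof (rule antisym)
  have ballots: "alpha ! 0 \<in> set alpha" "alpha ! (n - 2) \<in> set alpha"
    using assms(1,2) by auto
  show "mvs X n alpha P \<le> x"
    using assms ballots by (intro mvs_le_if_majority majority_if_all_but_one_voter) auto
  show "x \<le> mvs X n alpha P"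
    using assms ballots by (intro mvs_ge_if_majority majority_if_all_but_one_voter) auto
qed

context
  fixes n a b :: nat and alpha :: "nat list"
  assumes n: "2 \<le> n" and ab: "a < b"
    and alpha: "length alpha = n - 1" "sorted alpha" "set alpha \<subseteq> {a..b}"
begin

lemma extreme_ballots: "a \<le> alpha ! 0" "alpha ! 0 \<le> alpha ! (n - 2)" "alpha ! (n - 2) \<le> b"
proof -
  have "alpha ! 0 \<in> set alpha" "alpha ! (n - 2) \<in> set alpha"
    using n alpha(1) by auto
  then show "a \<le> alpha ! 0" "alpha ! 0 \<le> alpha ! (n - 2)" "alpha ! (n - 2) \<le> b"
    using alpha(3) sorted_nth_first_le[OF alpha(2)] by auto
qed

lemma option_set_mvs_eq:
  assumes "i \<in> {1..n}" "Q \<in> prefs {a..b}"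
  shows "option_set n {a..b} (mvs {a..b} n alpha) i Q
      = {min (top_of {a..b} Q) (alpha ! 0) .. max (top_of {a..b} Q) (alpha ! (n - 2))}"
proof (intro equalityI subsetI)
  fix y
  assume "y \<in> option_set n {a..b} (mvs {a..b} n alpha) i Q"
  then obtain P where "y = mvs {a..b} n alpha (P(i := Q))"
    unfolding option_set_def by blast
  then show "y \<in> {min (top_of {a..b} Q) (alpha ! 0) .. max (top_of {a..b} Q) (alpha ! (n - 2))}"
    using mvs_between[OF _ alpha(1,2) assms(1), of "{a..b}" "P(i := Q)"] n by simp
next
  fix x
  assume x: "x \<in> {min (top_of {a..b} Q) (alpha ! 0) .. max (top_of {a..b} Q) (alpha ! (n - 2))}"
  have "x \<in> {a..b}"
    using x top_of_in[OF assms(2)] extreme_ballots ab by auto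
  then obtain R where R: "R \<in> prefs {a..b}" "top_of {a..b} R = x"
    by (rule ex_pref_with_top)
  define P where "P j = (if j \<in> {1..n} then R else {})" for j
  have "P \<in> profiles n {a..b}"
    using R(1) by (simp add: profiles_def P_def)
  moreover have "mvs {a..b} n alpha (P(i := Q)) = x"
    using x R(2) by (intro mvs_eq_if_other_tops_eq[OF n alpha(1) assms(1)]) (simp_all add: P_def)
  ultimately show "x \<in> option_set n {a..b} (mvs {a..b} n alpha) i Q"
    unfolding option_set_def by blast
qed

lemma option_set_mvs_subset:
  assumes "i \<in> {1..n}" "Q \<in> prefs {a..b}"
  shows "option_set n {a..b} (mvs {a..b} n alpha) i Q \<subseteq> {a..b}"
  using option_set_mvs_eq[OF assms] top_of_in[OF assms(2)] extreme_ballots ab by auto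

lemma NOM_mvs_if_extreme_ballots_near_ends:
  assumes "alpha ! 0 \<le> a + 1" "b \<le> alpha ! (n - 2) + 1"
  shows "NOM n {a..b} (mvs {a..b} n alpha)"
proof -
  let ?f = "mvs {a..b} n alpha"
  have "\<not> obvious_manipulation n {a..b} ?f i Q Q'"
    if i: "i \<in> {1..n}" and Q: "Q \<in> prefs {a..b}" and Q': "Q' \<in> prefs {a..b}" for i Q Q'
  proof (rule not_obvious_manipulationI[OF Q finite_atLeastAtMost
        option_set_mvs_subset[OF i Q] option_set_mvs_subset[OF i Q']])
    let ?O = "option_set n {a..b} ?f i Q"
    define t where "t = top_of {a..b} Q"
    define w where "w = worst Q ?O"
    have O: "?O = {min t (alpha ! 0) .. max t (alpha ! (n - 2))}"
      unfolding t_def by (rule option_set_mvs_eq[OF i Q])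
    show "top_of {a..b} Q \<in> ?O"
      unfolding O t_def by simp
    have "alpha ! 0 \<in> ?O" "alpha ! (n - 2) \<in> ?O"
      unfolding O using extreme_ballots by auto
    then have top_worst: "w = t \<Longrightarrow> alpha ! 0 = t \<and> alpha ! (n - 2) = t"
      unfolding w_def t_def
      using worst_ne_top_of[OF Q finite_atLeastAtMost option_set_mvs_subset[OF i Q]] by blast
    have "w \<in> ?O"
      unfolding w_def using worst_in[OF Q _ _ option_set_mvs_subset[OF i Q]] O by simp
    moreover have "t \<in> {a..b}"
      unfolding t_def using top_of_in[OF Q] ab by simp
    ultimately have "alpha ! 0 \<le> w \<and> w \<le> alpha ! (n - 2)"
      using assms top_worst unfolding O
      by (cases "w = t") (auto simp: min_def max_def split: if_splits)
    then show "worst Q ?O \<in> option_set n {a..b} ?f i Q'"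
      unfolding option_set_mvs_eq[OF i Q'] w_def[symmetric] by auto
  qed
  then show ?thesis
    unfolding NOM_def by blast
qed

lemma not_NOM_mvs_if_first_ballot_far_from_bottom:
  assumes "a + 2 \<le> alpha ! 0"
  shows "\<not> NOM n {a..b} (mvs {a..b} n alpha)"
proof -
  have "a + 1 \<in> {a..b}" "alpha ! 0 \<in> {a..b}"
    using assms extreme_ballots by auto
  obtain Q where Q: "Q \<in> prefs {a..b}" "top_of {a..b} Q = a"
      "\<forall>u\<in>{a..b}. u \<noteq> a + 1 \<longrightarrow> (u, a + 1) \<in> Q"
    by (rule ex_pref_with_top_and_bottom[of "{a..b}" a "a + 1"]) (use \<open>a + 1 \<in> {a..b}\<close> ab in auto)
  obtain Q' where Q': "Q' \<in> prefs {a..b}" "top_of {a..b} Q' = alpha ! 0"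
    using \<open>alpha ! 0 \<in> {a..b}\<close> by (rule ex_pref_with_top)
  have i: "1 \<in> {1..n}"
    using n by simp
  have "obvious_manipulation n {a..b} (mvs {a..b} n alpha) 1 Q Q'"
  proof (rule obvious_manipulationI[OF Q(1) finite_atLeastAtMost option_set_mvs_subset[OF i Q(1)]
        option_set_mvs_subset[OF i Q'(1)] Q(3)])
    show "a + 1 \<in> option_set n {a..b} (mvs {a..b} n alpha) 1 Q"
      unfolding option_set_mvs_eq[OF i Q(1)] Q(2) using assms extreme_ballots by simp
    show "a + 1 \<notin> option_set n {a..b} (mvs {a..b} n alpha) 1 Q'"
      unfolding option_set_mvs_eq[OF i Q'(1)] Q'(2) using assms extreme_ballots by auto
  qed
  then show ?thesis
    unfolding NOM_def using i Q(1) Q'(1) by blast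
qed

lemma not_NOM_mvs_if_last_ballot_far_from_top:
  assumes "alpha ! (n - 2) + 2 \<le> b"
  shows "\<not> NOM n {a..b} (mvs {a..b} n alpha)"
proof -
  have "b - 1 \<in> {a..b}" "alpha ! (n - 2) \<in> {a..b}"
    using assms extreme_ballots by auto
  obtain Q where Q: "Q \<in> prefs {a..b}" "top_of {a..b} Q = b"
      "\<forall>u\<in>{a..b}. u \<noteq> b - 1 \<longrightarrow> (u, b - 1) \<in> Q"
    by (rule ex_pref_with_top_and_bottom[of "{a..b}" b "b - 1"]) (use \<open>b - 1 \<in> {a..b}\<close> ab in auto)
  obtain Q' where Q': "Q' \<in> prefs {a..b}" "top_of {a..b} Q' = alpha ! (n - 2)"
    using \<open>alpha ! (n - 2) \<in> {a..b}\<close> by (rule ex_pref_with_top)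
  have i: "1 \<in> {1..n}"
    using n by simp
  have "obvious_manipulation n {a..b} (mvs {a..b} n alpha) 1 Q Q'"
  proof (rule obvious_manipulationI[OF Q(1) finite_atLeastAtMost option_set_mvs_subset[OF i Q(1)]
        option_set_mvs_subset[OF i Q'(1)] Q(3)])
    show "b - 1 \<in> option_set n {a..b} (mvs {a..b} n alpha) 1 Q"
      unfolding option_set_mvs_eq[OF i Q(1)] Q(2) using assms extreme_ballots by simp
    show "b - 1 \<notin> option_set n {a..b} (mvs {a..b} n alpha) 1 Q'"
      unfolding option_set_mvs_eq[OF i Q'(1)] Q'(2) using assms extreme_ballots by auto
  qed
  then show ?thesis
    unfolding NOM_def using i Q(1) Q'(1) by blast
qed

end

theorem theorem2:
  fixes n a b :: nat and alpha :: "nat list"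
  assumes "n \<ge> 2" and "a < b"
    and "length alpha = n - 1" and "sorted alpha" and "set alpha \<subseteq> {a..b}"
  shows "NOM n {a..b} (mvs {a..b} n alpha) \<longleftrightarrow>
           (alpha ! 0 \<in> {a, a + 1} \<and> alpha ! (n - 2) \<in> {b - 1, b})"
  using extreme_ballots[OF assms] NOM_mvs_if_extreme_ballots_near_ends[OF assms]
    not_NOM_mvs_if_first_ballot_far_from_bottom[OF assms]
    not_NOM_mvs_if_last_ballot_far_from_top[OF assms]
  by fastforce

end
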